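(* Let $R$ be an Armendariz ring. Then the polynomial ring $R[x]$ is a generalized right quasi-Baer ring if and only if $R$ is a generalized right quasi-Baer ring.
   Context: All rings are associative with identity. For a nonempty subset $X$ of a ring $R$, $r_R(X)=\{a\in R : xa=0 \text{ for all } x\in X\}$, and for a positive integer $n$, $X^n$ denotes the set of all products $a_1\cdots a_n$ with $a_i\in X$. A ring $R$ is generalized right quasi-Baer if for every right ideal $I$ of $R$ there exist a positive integer $n$ (depending on $I$) and an idempotent $e\in R$ with $r_R(I^n)=eR$. A ring $R$ is Armendariz if whenever polynomials $f(x)=\sum_{i=0}^m a_ix^i$ and $g(x)=\sum_{j=0}^n b_jx^j$ in $R[x]$ satisfy $f(x)g(x)=0$, then $a_ib_j=0$ for all $i,j$. *)

theory Defs
  imports "HOL-Algebra.UnivPoly"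
begin

definition r_ann :: "('a, 'm) ring_scheme \<Rightarrow> 'a set \<Rightarrow> 'a set" where
  "r_ann S X = {a \<in> carrier S. \<forall>x\<in>X. x \<otimes>\<^bsub>S\<^esub> a = \<zero>\<^bsub>S\<^esub>}"

(* X^n = set of all products a_1 \<cdots> a_n with a_i \<in> X (only used for n \<ge> 1) *)
fun set_pow :: "('a, 'm) ring_scheme \<Rightarrow> 'a set \<Rightarrow> nat \<Rightarrow> 'a set" where
  "set_pow S X 0 = {\<one>\<^bsub>S\<^esub>}"
| "set_pow S X (Suc n) = (if n = 0 then X
     else {a \<otimes>\<^bsub>S\<^esub> b | a b. a \<in> set_pow S X n \<and> b \<in> X})"

definition right_ideal :: "'a set \<Rightarrow> ('a, 'm) ring_scheme \<Rightarrow> bool" where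
  "right_ideal I S \<longleftrightarrow> additive_subgroup I S \<and>
     (\<forall>a\<in>I. \<forall>r\<in>carrier S. a \<otimes>\<^bsub>S\<^esub> r \<in> I)"

definition gen_right_quasi_Baer :: "('a, 'm) ring_scheme \<Rightarrow> bool" where
  "gen_right_quasi_Baer S \<longleftrightarrow>
     (\<forall>I. right_ideal I S \<longrightarrow>
        (\<exists>n::nat. n > 0 \<and> (\<exists>e\<in>carrier S. e \<otimes>\<^bsub>S\<^esub> e = e \<and>
           r_ann S (set_pow S I n) = {e \<otimes>\<^bsub>S\<^esub> r | r. r \<in> carrier S})))"

definition armendariz :: "('a, 'm) ring_scheme \<Rightarrow> bool" where
  "armendariz R \<longleftrightarrow>
     (\<forall>f\<in>carrier (UP R). \<forall>g\<in>carrier (UP R).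
        f \<otimes>\<^bsub>UP R\<^esub> g = \<zero>\<^bsub>UP R\<^esub> \<longrightarrow>
        (\<forall>i j. coeff (UP R) f i \<otimes>\<^bsub>R\<^esub> coeff (UP R) g j = \<zero>\<^bsub>R\<^esub>))"

end

theory Submission
  imports Defs
begin

text \<open>
  For a right ideal \<open>J\<close> of \<open>R[x]\<close> let \<open>C\<close> be the set of coefficients of elements of \<open>J\<close>; it is
  a right ideal of \<open>R\<close>. Expanding products coefficientwise, a constant \<open>r\<close> with \<open>C\<^sup>n r = 0\<close>
  annihilates \<open>J\<^sup>n\<close>; conversely, by the Armendariz property and induction on \<open>n\<close>, every
  coefficient of a polynomial annihilating \<open>J\<^sup>n\<close> annihilates \<open>C\<^sup>n\<close>. So if
  \<open>r\<^sub>R(C\<^sup>n) = eR\<close>, then \<open>r\<^sub>R\<^sub>[\<^sub>x\<^sub>](J\<^sup>n) = e R[x]\<close>.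

  Conversely, over an Armendariz ring every idempotent of \<open>R[x]\<close> is a constant \<open>e\<close>
  (apply the Armendariz property to \<open>E(1 - E) = 0\<close> and \<open>(1 - E)E = 0\<close>). For a right
  ideal \<open>I\<close> of \<open>R\<close>, the same two facts for \<open>J = I[x]\<close>, whose coefficient set is \<open>I\<close>,
  turn \<open>r\<^sub>R\<^sub>[\<^sub>x\<^sub>](J\<^sup>n) = e R[x]\<close> into \<open>r\<^sub>R(I\<^sup>n) = eR\<close>.
\<close>

lemma set_pow_1 [simp]: "set_pow S X 1 = X"
  by simp

lemma set_pow_Suc_mult:
  "n > 0 \<Longrightarrow> a \<in> set_pow S X n \<Longrightarrow> b \<in> X \<Longrightarrow> a \<otimes>\<^bsub>S\<^esub> b \<in> set_pow S X (Suc n)"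
  by auto

lemma set_pow_SucE:
  assumes "n > 0" "c \<in> set_pow S X (Suc n)"
  obtains a b where "c = a \<otimes>\<^bsub>S\<^esub> b" "a \<in> set_pow S X n" "b \<in> X"
  using assms by auto

context ring
begin

lemma set_pow_carrier: "X \<subseteq> carrier R \<Longrightarrow> set_pow R X n \<subseteq> carrier R"
  by (induction n) auto

lemma set_pow_image:
  assumes "X \<subseteq> carrier R" "h ` X \<subseteq> Y" "n > 0"
    and "\<And>a b. a \<in> carrier R \<Longrightarrow> b \<in> carrier R \<Longrightarrow> h (a \<otimes> b) = h a \<otimes>\<^bsub>S\<^esub> h b"
  shows "h ` set_pow R X n \<subseteq> set_pow S Y n"
  using \<open>n > 0\<close>
proof (induction n rule: nat_induct_non_zero)
  case 1
  then show ?case using assms(2) by simp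
next
  case (Suc n)
  show ?case
  proof
    fix y assume "y \<in> h ` set_pow R X (Suc n)"
    then obtain a b where "y = h (a \<otimes> b)" "a \<in> set_pow R X n" "b \<in> X"
      using Suc.hyps by (auto elim: set_pow_SucE)
    moreover have "a \<in> carrier R" "b \<in> carrier R"
      using calculation set_pow_carrier assms(1) by blast+
    ultimately have "y = h a \<otimes>\<^bsub>S\<^esub> h b" "h a \<in> set_pow S Y n" "h b \<in> Y"
      using Suc assms by auto
    then show "y \<in> set_pow S Y (Suc n)"
      using Suc.hyps set_pow_Suc_mult by metis
  qed
qed

lemma r_ann_mult_closed: "X \<subseteq> carrier R \<Longrightarrow> a \<in> r_ann R X \<Longrightarrow> r \<in> carrier R \<Longrightarrow> a \<otimes> r \<in> r_ann R X"
  unfolding r_ann_def by (auto simp: m_assoc[symmetric] subsetD)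

lemma r_ann_eq_principal_iff:
  assumes "X \<subseteq> carrier R" "e \<in> carrier R" "e \<otimes> e = e"
  shows "r_ann R X = {e \<otimes> r | r. r \<in> carrier R} \<longleftrightarrow> e \<in> r_ann R X \<and> (\<forall>a\<in>r_ann R X. e \<otimes> a = a)"
proof
  assume ann: "r_ann R X = {e \<otimes> r | r. r \<in> carrier R}"
  have "e \<in> r_ann R X"
    unfolding ann using assms by (metis (mono_tags, lifting) mem_Collect_eq one_closed r_one)
  moreover have "e \<otimes> a = a" if "a \<in> r_ann R X" for a
    using that assms unfolding ann by (auto simp: m_assoc[symmetric])
  ultimately show "e \<in> r_ann R X \<and> (\<forall>a\<in>r_ann R X. e \<otimes> a = a)" by blast
next
  assume "e \<in> r_ann R X \<and> (\<forall>a\<in>r_ann R X. e \<otimes> a = a)"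
  then show "r_ann R X = {e \<otimes> r | r. r \<in> carrier R}"
    using r_ann_mult_closed[OF assms(1)] by (force simp: r_ann_def)
qed

lemma r_ann_set_pow_Suc:
  assumes "X \<subseteq> carrier R" "n > 0" "b \<in> X" "r \<in> r_ann R (set_pow R X (Suc n))"
  shows "b \<otimes> r \<in> r_ann R (set_pow R X n)"
proof -
  have "x \<otimes> (b \<otimes> r) = \<zero>" if "x \<in> set_pow R X n" for x
  proof -
    have "x \<otimes> b \<in> set_pow R X (Suc n)" using assms(2) that assms(3) by (rule set_pow_Suc_mult)
    moreover have "x \<in> carrier R" using that set_pow_carrier[OF assms(1)] by blast
    moreover have "\<forall>y\<in>set_pow R X (Suc n). y \<otimes> r = \<zero>" and "r \<in> carrier R"
      using assms(4) unfolding r_ann_def by blast+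
    ultimately show ?thesis using assms(1,3) by (metis m_assoc subsetD)
  qed
  then show ?thesis using assms by (auto simp: r_ann_def subsetD)
qed

lemma additive_subgroup_finsum_closed:
  assumes "additive_subgroup I R" "finite A" "\<And>i. i \<in> A \<Longrightarrow> f i \<in> I"
  shows "finsum R f A \<in> I"
  using assms(2,3)
proof (induction A rule: finite_induct)
  case empty
  then show ?case using assms(1) by (simp add: additive_subgroup.zero_closed)
next
  case (insert x F)
  have "I \<subseteq> carrier R" using assms(1) by (rule additive_subgroup.a_subset)
  then have "finsum R f (insert x F) = f x \<oplus> finsum R f F"
    using insert by (intro finsum_insert) auto
  then show ?case using insert assms(1) by (simp add: additive_subgroup.a_closed)
qed

lemma right_idealI:
  assumes "I \<subseteq> carrier R" "\<zero> \<in> I"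
    and "\<And>a b. a \<in> I \<Longrightarrow> b \<in> I \<Longrightarrow> a \<oplus> b \<in> I"
    and "\<And>a. a \<in> I \<Longrightarrow> \<ominus> a \<in> I"
    and "\<And>a r. a \<in> I \<Longrightarrow> r \<in> carrier R \<Longrightarrow> a \<otimes> r \<in> I"
  shows "right_ideal I R"
  unfolding right_ideal_def additive_subgroup_def
  using assms by (auto intro!: add.subgroupI)

end

definition coeffs_of :: "('a, 'm) ring_scheme \<Rightarrow> (nat \<Rightarrow> 'a) set \<Rightarrow> 'a set" where
  "coeffs_of R J = {coeff (UP R) f i | f i. f \<in> J}"

definition polys_over :: "('a, 'm) ring_scheme \<Rightarrow> 'a set \<Rightarrow> (nat \<Rightarrow> 'a) set" where
  "polys_over R I = {f \<in> carrier (UP R). \<forall>i. coeff (UP R) f i \<in> I}"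

context UP_ring
begin

lemma armendariz_coeff_mult_zero:
  assumes "armendariz R" "f \<in> carrier P" "g \<in> carrier P" "f \<otimes>\<^bsub>P\<^esub> g = \<zero>\<^bsub>P\<^esub>"
  shows "coeff P f i \<otimes> coeff P g j = \<zero>"
  using assms unfolding armendariz_def P_def by blast

lemma coeff_mult_monom:
  assumes "c \<in> carrier R" "p \<in> carrier P"
  shows "coeff P (p \<otimes>\<^bsub>P\<^esub> monom P c n) (m + n) = coeff P p m \<otimes> c"
proof -
  have "coeff P (p \<otimes>\<^bsub>P\<^esub> monom P c n) (m + n)
      = (\<Oplus>i\<in>{..m + n}. coeff P p i \<otimes> (if n = m + n - i then c else \<zero>))"
    using assms by simp
  also have "\<dots> = (\<Oplus>i\<in>{..m + n}. (if m = i then coeff P p i \<otimes> c else \<zero>))"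
    by (rule R.finsum_cong') (use assms in auto)
  also have "\<dots> = coeff P p m \<otimes> c"
    using assms by (simp add: R.finsum_singleton)
  finally show ?thesis .
qed

lemma coeffs_of_eq: "coeffs_of R J = {coeff P f i | f i. f \<in> J}"
  by (simp add: coeffs_of_def P_def)

lemma polys_over_eq: "polys_over R I = {f \<in> carrier P. \<forall>i. coeff P f i \<in> I}"
  by (simp add: polys_over_def P_def)

lemma right_ideal_coeffs_of:
  assumes "right_ideal J P"
  shows "right_ideal (coeffs_of R J) R"
proof -
  have J: "additive_subgroup J P" "\<And>f g. f \<in> J \<Longrightarrow> g \<in> carrier P \<Longrightarrow> f \<otimes>\<^bsub>P\<^esub> g \<in> J"
    using assms unfolding right_ideal_def by auto
  then have JP: "J \<subseteq> carrier P" by (simp add: additive_subgroup.a_subset)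
  show ?thesis unfolding coeffs_of_eq
  proof (rule R.right_idealI)
    show "{coeff P f i | f i. f \<in> J} \<subseteq> carrier R" using JP by auto
    show "\<zero> \<in> {coeff P f i | f i. f \<in> J}"
      using additive_subgroup.zero_closed[OF J(1)] by force
  next
    fix a b assume "a \<in> {coeff P f i | f i. f \<in> J}" "b \<in> {coeff P f i | f i. f \<in> J}"
    then obtain f i g j where fg: "f \<in> J" "a = coeff P f i" "g \<in> J" "b = coeff P g j"
      by auto
    \<comment> \<open>Shift \<open>f\<close> and \<open>g\<close> so that \<open>a\<close> and \<open>b\<close> both become the coefficient of \<open>x\<^sup>i\<^sup>+\<^sup>j\<close>.\<close>
    let ?h = "f \<otimes>\<^bsub>P\<^esub> monom P \<one> j \<oplus>\<^bsub>P\<^esub> g \<otimes>\<^bsub>P\<^esub> monom P \<one> i"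
    have h: "?h \<in> J" using fg J by (simp add: additive_subgroup.a_closed)
    have "coeff P (f \<otimes>\<^bsub>P\<^esub> monom P \<one> j) (i + j) = a"
      using coeff_mult_monom[OF R.one_closed, of f j i] fg JP by (auto simp del: coeff_mult)
    moreover have "coeff P (g \<otimes>\<^bsub>P\<^esub> monom P \<one> i) (i + j) = b"
      using coeff_mult_monom[OF R.one_closed, of g i j] fg JP
      by (auto simp del: coeff_mult simp: add.commute)
    moreover have "f \<in> carrier P" "g \<in> carrier P" using fg JP by auto
    ultimately have "coeff P ?h (i + j) = a \<oplus> b"
      using fg by (simp del: coeff_mult)
    then show "a \<oplus> b \<in> {coeff P f i | f i. f \<in> J}" using h by (metis (mono_tags) mem_Collect_eq)
  next
    fix a assume "a \<in> {coeff P f i | f i. f \<in> J}"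
    then obtain f i where "f \<in> J" "a = coeff P f i" by auto
    moreover have "\<ominus>\<^bsub>P\<^esub> f \<in> J" using calculation J by (simp add: additive_subgroup.a_inv_closed)
    ultimately show "\<ominus> a \<in> {coeff P f i | f i. f \<in> J}" using JP by force
  next
    fix a r assume "a \<in> {coeff P f i | f i. f \<in> J}" "r \<in> carrier R"
    then obtain f i where f: "f \<in> J" "a = coeff P f i" by auto
    have "f \<otimes>\<^bsub>P\<^esub> monom P r 0 \<in> J" using f \<open>r \<in> carrier R\<close> J by simp
    moreover have "a \<otimes> r = coeff P (f \<otimes>\<^bsub>P\<^esub> monom P r 0) i"
      using coeff_mult_monom[of r f 0 i] \<open>r \<in> carrier R\<close> f JP by (auto simp del: coeff_mult)
    ultimately show "a \<otimes> r \<in> {coeff P f i | f i. f \<in> J}" by (metis (mono_tags) mem_Collect_eq)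
  qed
qed

lemma right_ideal_polys_over:
  assumes "right_ideal I R"
  shows "right_ideal (polys_over R I) P"
proof -
  have I: "additive_subgroup I R" "\<And>a r. a \<in> I \<Longrightarrow> r \<in> carrier R \<Longrightarrow> a \<otimes> r \<in> I"
    using assms unfolding right_ideal_def by auto
  show ?thesis unfolding polys_over_eq
  proof (rule P.right_idealI)
    fix f g assume f: "f \<in> {f \<in> carrier P. \<forall>i. coeff P f i \<in> I}" and g: "g \<in> carrier P"
    have "coeff P (f \<otimes>\<^bsub>P\<^esub> g) k \<in> I" for k
    proof -
      have "(\<Oplus>i\<in>{..k}. coeff P f i \<otimes> coeff P g (k - i)) \<in> I"
        using f g I by (intro R.additive_subgroup_finsum_closed) auto
      then show ?thesis using f g by simp
    qed
    then show "f \<otimes>\<^bsub>P\<^esub> g \<in> {f \<in> carrier P. \<forall>i. coeff P f i \<in> I}" using f g by simp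
  qed (use I in \<open>auto simp: additive_subgroup.a_closed additive_subgroup.a_inv_closed
      intro: additive_subgroup.zero_closed\<close>)
qed

lemma coeff_set_pow_mult_r_ann:
  assumes "J \<subseteq> carrier P" "C \<subseteq> carrier R" "\<And>f i. f \<in> J \<Longrightarrow> coeff P f i \<in> C"
    and "n > 0" "p \<in> set_pow P J n" "r \<in> r_ann R (set_pow R C n)"
  shows "coeff P p k \<otimes> r = \<zero>"
  using \<open>n > 0\<close> assms(5,6)
proof (induction n arbitrary: p r k rule: nat_induct_non_zero)
  case 1
  then show ?case using assms(3) by (simp add: r_ann_def)
next
  case (Suc n)
  obtain a b where p: "p = a \<otimes>\<^bsub>P\<^esub> b" "a \<in> set_pow P J n" "b \<in> J"
    using Suc.hyps Suc.prems(1) by (rule set_pow_SucE)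
  have ab: "a \<in> carrier P" "b \<in> carrier P" "r \<in> carrier R"
    using p assms(1) P.set_pow_carrier Suc.prems(2) by (auto simp: r_ann_def)
  have "coeff P b j \<otimes> r \<in> r_ann R (set_pow R C n)" for j
    using p Suc assms(2,3) by (intro R.r_ann_set_pow_Suc) auto
  then have zero: "coeff P a i \<otimes> (coeff P b j \<otimes> r) = \<zero>" for i j
    using Suc.IH p by blast
  have "coeff P p k \<otimes> r = (\<Oplus>i\<in>{..k}. coeff P a i \<otimes> coeff P b (k - i)) \<otimes> r"
    using p ab by simp
  also have "\<dots> = (\<Oplus>i\<in>{..k}. coeff P a i \<otimes> (coeff P b (k - i) \<otimes> r))"
    using ab by (simp add: R.finsum_ldistr R.m_assoc Pi_def)
  also have "\<dots> = \<zero>" using zero by simp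
  finally show ?case .
qed

lemma monom_in_r_ann_set_pow:
  assumes "J \<subseteq> carrier P" "C \<subseteq> carrier R" "\<And>f i. f \<in> J \<Longrightarrow> coeff P f i \<in> C"
    and "n > 0" "r \<in> r_ann R (set_pow R C n)"
  shows "monom P r 0 \<in> r_ann P (set_pow P J n)"
proof -
  have r: "r \<in> carrier R" using assms(5) by (simp add: r_ann_def)
  have "p \<otimes>\<^bsub>P\<^esub> monom P r 0 = \<zero>\<^bsub>P\<^esub>" if p: "p \<in> set_pow P J n" for p
  proof -
    have pP: "p \<in> carrier P" using p P.set_pow_carrier assms(1) by blast
    show ?thesis
    proof (rule up_eqI)
      fix k
      show "coeff P (p \<otimes>\<^bsub>P\<^esub> monom P r 0) k = coeff P \<zero>\<^bsub>P\<^esub> k"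
        using coeff_mult_monom[OF r pP, of 0 k] coeff_set_pow_mult_r_ann[OF assms(1-4) p assms(5)]
        by (simp del: coeff_mult)
    qed (use pP r in auto)
  qed
  then show ?thesis using r by (simp add: r_ann_def)
qed

lemma coeff_in_r_ann_set_pow:
  assumes arm: "armendariz R" and J: "J \<subseteq> carrier P"
    and "n > 0" "g \<in> r_ann P (set_pow P J n)"
  shows "coeff P g j \<in> r_ann R (set_pow R (coeffs_of R J) n)"
  using \<open>n > 0\<close> assms(4)
proof (induction n arbitrary: g j rule: nat_induct_non_zero)
  case 1
  then show ?case
    using armendariz_coeff_mult_zero[OF arm] J by (auto simp: r_ann_def coeffs_of_eq)
next
  case (Suc n)
  have g: "g \<in> carrier P" using Suc.prems by (simp add: r_ann_def)
  have "c \<otimes> coeff P g j = \<zero>" if cC: "c \<in> set_pow R (coeffs_of R J) (Suc n)" for c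
  proof -
    obtain c' b where c: "c = c' \<otimes> b" "c' \<in> set_pow R (coeffs_of R J) n" "b \<in> coeffs_of R J"
      using Suc.hyps cC by (rule set_pow_SucE)
    then obtain f i where f: "f \<in> J" "b = coeff P f i" by (auto simp: coeffs_of_eq)
    have c'R: "c' \<in> carrier R"
      using c R.set_pow_carrier[of "coeffs_of R J"] J by (force simp: coeffs_of_eq)
    have fP: "f \<in> carrier P" using f J by auto
    have "f \<otimes>\<^bsub>P\<^esub> g \<in> r_ann P (set_pow P J n)"
      using P.r_ann_set_pow_Suc[OF J Suc.hyps f(1) Suc.prems] .
    then have "c' \<otimes> coeff P (f \<otimes>\<^bsub>P\<^esub> g) k = \<zero>" for k
      using Suc.IH c(2) by (simp add: r_ann_def)
    then have "c' \<odot>\<^bsub>P\<^esub> (f \<otimes>\<^bsub>P\<^esub> g) = \<zero>\<^bsub>P\<^esub>"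
      by (intro up_eqI) (use c'R fP g in auto)
    then have "(c' \<odot>\<^bsub>P\<^esub> f) \<otimes>\<^bsub>P\<^esub> g = \<zero>\<^bsub>P\<^esub>" using UP_smult_assoc2 c'R fP g by simp
    then have "coeff P (c' \<odot>\<^bsub>P\<^esub> f) i \<otimes> coeff P g j = \<zero>"
      by (rule armendariz_coeff_mult_zero[OF arm UP_smult_closed[OF c'R fP] g])
    then show ?thesis using c f c'R fP by simp
  qed
  then show ?case using g by (simp add: r_ann_def)
qed

lemma armendariz_idempotent_const:
  assumes arm: "armendariz R" and E: "E \<in> carrier P" "E \<otimes>\<^bsub>P\<^esub> E = E"
  shows "E = monom P (coeff P E 0) 0"
proof -
  define F where "F = \<one>\<^bsub>P\<^esub> \<ominus>\<^bsub>P\<^esub> E"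
  have F: "F \<in> carrier P" using E by (simp add: F_def)
  have EF: "E \<otimes>\<^bsub>P\<^esub> F = \<zero>\<^bsub>P\<^esub>" and FE: "F \<otimes>\<^bsub>P\<^esub> E = \<zero>\<^bsub>P\<^esub>"
    unfolding F_def using E by (simp_all add: P.minus_eq P.r_distr P.l_distr P.r_minus P.l_minus P.r_neg)
  show ?thesis
  proof (rule up_eqI)
    fix i
    show "coeff P E i = coeff P (monom P (coeff P E 0) 0) i"
    proof (cases "i = 0")
      case False
      let ?e = "coeff P E 0" and ?a = "coeff P E i"
      have eR: "?e \<in> carrier R" and aR: "?a \<in> carrier R" using E by auto
      \<comment> \<open>Armendariz applied to \<open>E(1 - E) = 0\<close> and \<open>(1 - E)E = 0\<close>: \<open>e a = 0\<close> and \<open>(1 - e) a = 0\<close>.\<close>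
      have "?e \<otimes> coeff P F i = \<zero>" using armendariz_coeff_mult_zero[OF arm E(1) F EF] .
      moreover have "coeff P F i = \<ominus> ?a" using False E by (simp add: F_def R.minus_eq)
      ultimately have ea: "?e \<otimes> ?a = \<zero>" using eR aR by (simp add: R.r_minus)
      have "coeff P F 0 \<otimes> ?a = \<zero>" using armendariz_coeff_mult_zero[OF arm F E(1) FE] .
      moreover have "coeff P F 0 = \<one> \<ominus> ?e" using E by (simp add: F_def)
      ultimately have "?a \<ominus> ?e \<otimes> ?a = \<zero>"
        using eR aR by (simp add: R.minus_eq R.l_distr R.l_minus)
      then have "?a = \<zero>" using ea aR by (simp add: R.minus_eq)
      then show ?thesis using False eR by simp
    qed (use E in simp)
  qed (use E in auto)
qed

lemma gen_right_quasi_Baer_UP_if_gen_right_quasi_Baer: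
  assumes arm: "armendariz R" and "gen_right_quasi_Baer R"
  shows "gen_right_quasi_Baer P"
  unfolding gen_right_quasi_Baer_def
proof (intro allI impI)
  fix J assume "right_ideal J P"
  then have J: "J \<subseteq> carrier P"
    unfolding right_ideal_def by (simp add: additive_subgroup.a_subset)
  let ?C = "coeffs_of R J"
  have C: "?C \<subseteq> carrier R" "\<And>f i. f \<in> J \<Longrightarrow> coeff P f i \<in> ?C"
    using J by (auto simp: coeffs_of_eq)
  obtain n e where n: "n > 0" and e: "e \<in> carrier R" "e \<otimes> e = e"
    and "r_ann R (set_pow R ?C n) = {e \<otimes> r | r. r \<in> carrier R}"
    using assms right_ideal_coeffs_of[OF \<open>right_ideal J P\<close>]
    unfolding gen_right_quasi_Baer_def by blast
  then have e_ann: "e \<in> r_ann R (set_pow R ?C n)"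
    and e_left_id: "\<And>a. a \<in> r_ann R (set_pow R ?C n) \<Longrightarrow> e \<otimes> a = a"
    using R.r_ann_eq_principal_iff[OF R.set_pow_carrier[OF C(1)] e] by blast+
  let ?E = "monom P e 0"
  have E: "?E \<in> carrier P" "?E \<otimes>\<^bsub>P\<^esub> ?E = ?E"
    using e monom_mult[OF e(1) e(1), of 0 0] by simp_all
  have "?E \<otimes>\<^bsub>P\<^esub> g = g" if "g \<in> r_ann P (set_pow P J n)" for g
  proof -
    have g: "g \<in> carrier P" using that by (simp add: r_ann_def)
    have "e \<otimes> coeff P g j = coeff P g j" for j
      using e_left_id coeff_in_r_ann_set_pow[OF arm J n that] by blast
    then show ?thesis using e g by (intro up_eqI) (simp_all add: monom_mult_is_smult)
  qed
  moreover have "?E \<in> r_ann P (set_pow P J n)"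
    using monom_in_r_ann_set_pow[OF J C n e_ann] .
  ultimately have "r_ann P (set_pow P J n) = {?E \<otimes>\<^bsub>P\<^esub> r | r. r \<in> carrier P}"
    using P.r_ann_eq_principal_iff[OF P.set_pow_carrier[OF J] E] by blast
  then show "\<exists>n>0. \<exists>E\<in>carrier P. E \<otimes>\<^bsub>P\<^esub> E = E \<and>
      r_ann P (set_pow P J n) = {E \<otimes>\<^bsub>P\<^esub> r | r. r \<in> carrier P}"
    using n E by blast
qed

lemma gen_right_quasi_Baer_if_gen_right_quasi_Baer_UP:
  assumes arm: "armendariz R" and "gen_right_quasi_Baer P"
  shows "gen_right_quasi_Baer R"
  unfolding gen_right_quasi_Baer_def
proof (intro allI impI)
  fix I assume "right_ideal I R"
  then have I: "additive_subgroup I R" "I \<subseteq> carrier R"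
    unfolding right_ideal_def by (simp_all add: additive_subgroup.a_subset)
  let ?J = "polys_over R I"
  have J: "?J \<subseteq> carrier P" "\<And>f i. f \<in> ?J \<Longrightarrow> coeff P f i \<in> I"
    by (auto simp: polys_over_eq)
  obtain n E where n: "n > 0" and E: "E \<in> carrier P" "E \<otimes>\<^bsub>P\<^esub> E = E"
    and "r_ann P (set_pow P ?J n) = {E \<otimes>\<^bsub>P\<^esub> r | r. r \<in> carrier P}"
    using assms right_ideal_polys_over[OF \<open>right_ideal I R\<close>]
    unfolding gen_right_quasi_Baer_def by blast
  then have E_ann: "E \<in> r_ann P (set_pow P ?J n)"
    and E_left_id: "\<And>g. g \<in> r_ann P (set_pow P ?J n) \<Longrightarrow> E \<otimes>\<^bsub>P\<^esub> g = g"
    using P.r_ann_eq_principal_iff[OF P.set_pow_carrier[OF J(1)] E] by blast+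
  define e where "e = coeff P E 0"
  have e: "e \<in> carrier R" and E_const: "E = monom P e 0"
    using E armendariz_idempotent_const[OF arm E] by (simp_all add: e_def)
  have coeff0_const_mult: "coeff P (monom P c 0 \<otimes>\<^bsub>P\<^esub> p) 0 = c \<otimes> coeff P p 0"
    if "c \<in> carrier R" "p \<in> carrier P" for c p
    using coeff_monom_mult[OF that, of 0 0] by simp
  have idem: "e \<otimes> e = e"
    using coeff0_const_mult[OF e E(1)] E(2) by (simp add: E_const[symmetric] e_def[symmetric])
  have "(\<lambda>c. monom P c 0) ` I \<subseteq> ?J"
    using I by (auto simp: polys_over_eq additive_subgroup.zero_closed)
  then have monom_set_pow: "(\<lambda>c. monom P c 0) ` set_pow R I n \<subseteq> set_pow P ?J n"
    by (rule R.set_pow_image[OF I(2) _ n]) (use monom_mult[of _ _ 0 0] in simp)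
  have "c \<otimes> e = \<zero>" if c: "c \<in> set_pow R I n" for c
  proof -
    have "monom P c 0 \<otimes>\<^bsub>P\<^esub> E = \<zero>\<^bsub>P\<^esub>"
      using E_ann c monom_set_pow by (auto simp: r_ann_def)
    moreover have "c \<in> carrier R" using c R.set_pow_carrier[OF I(2)] by blast
    ultimately show ?thesis using coeff0_const_mult[OF _ E(1), of c] by (simp add: e_def)
  qed
  moreover have "e \<otimes> a = a" if "a \<in> r_ann R (set_pow R I n)" for a
  proof -
    have "monom P a 0 \<in> r_ann P (set_pow P ?J n)"
      using monom_in_r_ann_set_pow[OF J(1) I(2) J(2) n that] .
    then have "E \<otimes>\<^bsub>P\<^esub> monom P a 0 = monom P a 0" by (rule E_left_id)
    then show ?thesis
      using coeff0_const_mult[of e "monom P a 0"] e that by (simp add: E_const r_ann_def)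
  qed
  ultimately have "r_ann R (set_pow R I n) = {e \<otimes> r | r. r \<in> carrier R}"
    using R.r_ann_eq_principal_iff[OF R.set_pow_carrier[OF I(2)] e idem] e
    by (auto simp: r_ann_def)
  then show "\<exists>n>0. \<exists>e\<in>carrier R. e \<otimes> e = e \<and> r_ann R (set_pow R I n) = {e \<otimes> r | r. r \<in> carrier R}"
    using n e idem by blast
qed

end

theorem corollary3p11:
  fixes R :: "('a, 'm) ring_scheme"
  assumes "ring R" and "armendariz R"
  shows "gen_right_quasi_Baer (UP R) \<longleftrightarrow> gen_right_quasi_Baer R"
proof -
  interpret UP_ring R "UP R" by (simp add: UP_ring_def assms(1))
  show ?thesis
    using gen_right_quasi_Baer_UP_if_gen_right_quasi_Baer
      gen_right_quasi_Baer_if_gen_right_quasi_Baer_UP assms(2) by blast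
qed

end
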